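(* Let $g\ge2$ be an integer and let $k,d_1,d_2,d_3,\ell,m,n$ be positive integers with $1\le d_1,d_2,d_3\le g-1$, $\ell\le m\le n$ and $n\ge 2$, satisfying $$F_k=d_1\frac{g^\ell-1}{g-1}\cdot d_2\frac{g^m-1}{g-1}\cdot d_3\frac{g^n-1}{g-1}.$$ Then $$k<3n\frac{\log g}{\log\alpha}+2<10n\log g,$$ where $\alpha=(1+\sqrt5)/2$.
   Context: $(F_n)_{n\ge 0}$ is the Fibonacci sequence: $F_0=0$, $F_1=1$, $F_{n+2}=F_{n+1}+F_n$. $\log$ is the natural logarithm. *)

theory Defs
  imports Complex_Main "HOL-Number_Theory.Fib"
begin

end

theory Submission
  imports Defs
begin

text \<open>
  A factor \<open>d (g^j - 1) / (g - 1)\<close> with \<open>d \<le> g - 1\<close> and \<open>j \<le> n\<close> is less than \<open>g^n\<close>,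
  so \<open>F_k < g^(3n)\<close>; together with the classical bound \<open>\<alpha>^(k-2) \<le> F_k\<close> this gives
  the first inequality after taking logarithms. The second one only needs
  \<open>log \<alpha> > 2/5\<close> and \<open>n log g \<ge> 2 log 2 > 4/5\<close>, and \<open>log x > 2/5\<close> follows from
  \<open>e^2 < 9 < x^5\<close>.
\<close>

definition golden_ratio :: real where
  "golden_ratio = (1 + sqrt 5) / 2"

lemma golden_ratio_squared: "golden_ratio\<^sup>2 = golden_ratio + 1"
  by (simp add: golden_ratio_def power2_eq_square field_simps)

lemma golden_ratio_bounds: "8 / 5 < golden_ratio" "golden_ratio < 2"
proof -
  have "11 / 5 < sqrt (5::real)" by (rule real_less_rsqrt) (simp add: power2_eq_square)
  then show "8 / 5 < golden_ratio" by (simp add: golden_ratio_def)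
  have "sqrt (5::real) < 3" by (rule real_less_lsqrt) (simp_all add: power2_eq_square)
  then show "golden_ratio < 2" by (simp add: golden_ratio_def)
qed

lemma golden_ratio_power_le_fib: "golden_ratio ^ n \<le> real (fib (n + 2))"
proof (induction n rule: fib.induct)
  case 1
  show ?case by simp
next
  case 2
  show ?case using golden_ratio_bounds(2) by (simp add: numeral_3_eq_3)
next
  case (3 n)
  have "golden_ratio ^ Suc (Suc n) = golden_ratio ^ n * golden_ratio\<^sup>2"
    by (metis add_2_eq_Suc' power_add)
  also have "\<dots> = golden_ratio ^ Suc n + golden_ratio ^ n"
    by (simp add: golden_ratio_squared algebra_simps)
  also have "\<dots> \<le> real (fib (Suc n + 2)) + real (fib (n + 2))"
    using "3.IH" by (intro add_mono)
  also have "\<dots> = real (fib (Suc (Suc n) + 2))"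
    by (simp add: numeral_2_eq_2)
  finally show ?case .
qed

lemma fib_index_less_log:
  assumes "real (fib k) < x" and "1 \<le> x"
  shows "real k < ln x / ln golden_ratio + 2"
proof -
  have ln_golden_ratio_pos: "0 < ln golden_ratio"
    using golden_ratio_bounds(1) by simp
  show ?thesis
  proof (cases "k < 2")
    case True
    moreover have "0 \<le> ln x / ln golden_ratio"
      using assms(2) ln_golden_ratio_pos by simp
    ultimately show ?thesis by linarith
  next
    case False
    then obtain j where k: "k = j + 2" by (metis add.commute le_add_diff_inverse not_less)
    have "golden_ratio ^ j < x"
      using golden_ratio_power_le_fib[of j] assms(1) k by simp
    then have "ln (golden_ratio ^ j) < ln x"
      using golden_ratio_bounds(1) assms(2) by (intro ln_less_cancel_iff[THEN iffD2]) auto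
    then have "real j * ln golden_ratio < ln x"
      using golden_ratio_bounds(1) by (simp add: ln_realpow)
    then show ?thesis
      using ln_golden_ratio_pos k by (simp add: pos_less_divide_eq)
  qed
qed

lemma digit_repunit_bounds:
  fixes g d :: real
  assumes "1 < g" and "0 \<le> d" and "d \<le> g - 1" and "j \<le> n"
  shows "0 \<le> d * (g ^ j - 1) / (g - 1)" and "d * (g ^ j - 1) / (g - 1) < g ^ n"
proof -
  have "1 \<le> g ^ j" using assms(1) by simp
  then show "0 \<le> d * (g ^ j - 1) / (g - 1)" using assms by simp
  have "d * (g ^ j - 1) \<le> (g - 1) * (g ^ j - 1)"
    using \<open>1 \<le> g ^ j\<close> assms(3) by (intro mult_right_mono) auto
  then have "d * (g ^ j - 1) / (g - 1) \<le> g ^ j - 1"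
    using assms(1) by (simp add: divide_le_eq mult.commute)
  moreover have "g ^ j \<le> g ^ n" using assms(1,4) by (intro power_increasing) auto
  ultimately show "d * (g ^ j - 1) / (g - 1) < g ^ n" by linarith
qed

lemma two_fifths_less_ln:
  fixes x :: real
  assumes "0 < x" and "9 < x ^ 5"
  shows "2 / 5 < ln x"
proof -
  have "exp 2 = exp (1::real) ^ 2" by (simp flip: exp_of_nat_mult)
  also have "\<dots> \<le> 3 ^ 2" using exp_le by (intro power_mono) auto
  also have "\<dots> < x ^ 5" using assms(2) by simp
  finally have "2 < ln (x ^ 5)" using ln_less_cancel_iff[of "exp 2" "x ^ 5"] assms(1) by simp
  then show ?thesis using assms(1) by (simp add: ln_realpow)
qed

lemma two_fifths_less_ln_golden_ratio: "2 / 5 < ln golden_ratio"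
proof (rule two_fifths_less_ln)
  show "0 < golden_ratio" using golden_ratio_bounds(1) by simp
  have "(8 / 5) ^ 5 \<le> golden_ratio ^ 5"
    using golden_ratio_bounds(1) by (intro power_mono) auto
  moreover have "9 < (8 / 5 :: real) ^ 5" by (simp add: power_divide)
  ultimately show "9 < golden_ratio ^ 5" by linarith
qed

lemma golden_ratio_log_bound:
  fixes y :: real
  assumes "4 / 5 < y"
  shows "3 * y / ln golden_ratio + 2 < 10 * y"
proof -
  have "3 * y / ln golden_ratio < 3 * y / (2 / 5)"
    using two_fifths_less_ln_golden_ratio assms by (intro divide_strict_left_mono) auto
  then show ?thesis using assms by simp
qed

theorem lemma3p1:
  fixes g k d1 d2 d3 l m n :: nat
  assumes "g \<ge> 2"
    and "k \<ge> 1" and "l \<ge> 1" and "m \<ge> 1" and "n \<ge> 1"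
    and "1 \<le> d1" and "d1 \<le> g - 1"
    and "1 \<le> d2" and "d2 \<le> g - 1"
    and "1 \<le> d3" and "d3 \<le> g - 1"
    and "l \<le> m" and "m \<le> n" and "n \<ge> 2"
    and "real (fib k) =
           (real d1 * (real g ^ l - 1) / (real g - 1)) *
           (real d2 * (real g ^ m - 1) / (real g - 1)) *
           (real d3 * (real g ^ n - 1) / (real g - 1))"
  shows "real k < 3 * real n * ln (real g) / ln ((1 + sqrt 5) / 2) + 2
       \<and> 3 * real n * ln (real g) / ln ((1 + sqrt 5) / 2) + 2 < 10 * real n * ln (real g)"
proof -
  let ?L = "ln (real g)"
  have g: "1 < real g" using assms(1) by simp
  have digit: "real d \<le> real g - 1" if "d \<le> g - 1" for d using that assms(1) by linarith
  have "l \<le> n" using assms(12,13) by simp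
  note bounds1 = digit_repunit_bounds[OF g of_nat_0_le_iff digit[OF assms(7)] \<open>l \<le> n\<close>]
    and bounds2 = digit_repunit_bounds[OF g of_nat_0_le_iff digit[OF assms(9)] assms(13)]
    and bounds3 = digit_repunit_bounds[OF g of_nat_0_le_iff digit[OF assms(11)] order.refl]
  have "real (fib k) < real g ^ n * real g ^ n * real g ^ n"
    unfolding assms(15)
    by (intro mult_strict_mono' mult_nonneg_nonneg bounds1 bounds2 bounds3)
  also have "\<dots> = real g ^ (3 * n)"
    by (simp add: power_mult power3_eq_cube power_mult_distrib flip: mult.commute[of 3 n])
  finally have "real (fib k) < real g ^ (3 * n)" .
  then have "real k < ln (real g ^ (3 * n)) / ln golden_ratio + 2"
    using assms(1) by (intro fib_index_less_log) auto
  then have bound: "real k < 3 * real n * ?L / ln golden_ratio + 2"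
    using assms(1) by (simp add: ln_realpow)
  have "ln 2 \<le> ?L" using assms(1) by simp
  then have "2 / 5 < ?L" using two_fifths_less_ln[of 2] by simp
  moreover have "2 * ?L \<le> real n * ?L"
    using assms(14) \<open>2 / 5 < ?L\<close> by (intro mult_right_mono) auto
  ultimately have "4 / 5 < real n * ?L" by linarith
  then have "3 * (real n * ?L) / ln golden_ratio + 2 < 10 * (real n * ?L)"
    by (rule golden_ratio_log_bound)
  then have "3 * real n * ?L / ln golden_ratio + 2 < 10 * real n * ?L"
    by (simp add: mult.assoc)
  with bound show ?thesis unfolding golden_ratio_def by blast
qed

end
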